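(* For any probabilistic single-item auction, the maximum expected revenue over all mixed signaling schemes is at least $\mathcal{B}/2$, where $\mathcal{B}=\min_{i'}\sum_{j=1}^m\max_{i\ne i'}\psi_{i,j}$.
   Context: A probabilistic single-item auction: $n\ge 2$ bidders, $m$ item types with probabilities $p_j$, nonnegative valuations $v_{i,j}$; $\psi_{i,j}=p_jv_{i,j}$. After observing the type, the auctioneer broadcasts a signal; bidders bid their conditional expected valuations in a second-price auction. A mixed signaling scheme is a finite signal set $\mathcal{S}$ and $\varphi:[m]\times\mathcal{S}\to[0,1]$ with $\sum_S\varphi(j,S)=1$ for each $j$. Its expected revenue is $\sum_{S\in\mathcal{S}}\mathrm{max2}_i\{\sum_j\psi_{i,j}\varphi(j,S)\}$, where $\mathrm{max2}$ is the second-largest entry of a list (with multiplicity). *)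

theory Defs
  imports Complex_Main
begin

text \<open>Second-largest entry of a list (with multiplicity); lists of length \<ge> 2 expected.\<close>
definition max2 :: "real list \<Rightarrow> real" where
  "max2 xs = sort xs ! (length xs - 2)"

text \<open>Bidders are 0..<n, item types 0..<m. psi i j = p_j * v_{i,j}.\<close>
definition psi :: "(nat \<Rightarrow> real) \<Rightarrow> (nat \<Rightarrow> nat \<Rightarrow> real) \<Rightarrow> nat \<Rightarrow> nat \<Rightarrow> real" where
  "psi p v i j = p j * v i j"

definition mixed_scheme :: "nat \<Rightarrow> 's set \<Rightarrow> (nat \<Rightarrow> 's \<Rightarrow> real) \<Rightarrow> bool" where
  "mixed_scheme m S \<phi> \<longleftrightarrow> finite S \<and>
     (\<forall>j<m. \<forall>s\<in>S. 0 \<le> \<phi> j s \<and> \<phi> j s \<le> 1) \<and>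
     (\<forall>j<m. (\<Sum>s\<in>S. \<phi> j s) = 1)"

definition revenue :: "nat \<Rightarrow> nat \<Rightarrow> (nat \<Rightarrow> real) \<Rightarrow> (nat \<Rightarrow> nat \<Rightarrow> real)
    \<Rightarrow> 's set \<Rightarrow> (nat \<Rightarrow> 's \<Rightarrow> real) \<Rightarrow> real" where
  "revenue n m p v S \<phi> =
     (\<Sum>s\<in>S. max2 (map (\<lambda>i. \<Sum>j<m. psi p v i j * \<phi> j s) [0..<n]))"

definition benchmark :: "nat \<Rightarrow> nat \<Rightarrow> (nat \<Rightarrow> real) \<Rightarrow> (nat \<Rightarrow> nat \<Rightarrow> real) \<Rightarrow> real" where
  "benchmark n m p v =
     Min ((\<lambda>i'. \<Sum>j<m. Max ((\<lambda>i. psi p v i j) ` ({..<n} - {i'}))) ` {..<n})"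

end

theory Submission
  imports Defs "HOL-Library.Multiset" "HOL-Library.Countable"
begin

text \<open>
For each item type \<open>j\<close> let \<open>winner j\<close> be a bidder with the highest value \<open>highest j\<close>,
let \<open>winnings a\<close> sum \<open>highest j\<close> over the items won by \<open>a\<close>, and let \<open>total\<close> be the
sum of all winnings. Lay intervals of lengths \<open>winnings a\<close> side by side on \<open>[0, total]\<close>
and translate them by \<open>total / 2\<close>. The overlap \<open>z a b\<close> of interval \<open>a\<close> with the translate
of interval \<open>b\<close> is mass that can be moved, out of the items won by \<open>a\<close> and by \<open>b\<close>, into a
common signal in which both bid \<open>z a b\<close>. For \<open>a \<noteq> b\<close> these signals earn
\<open>total / 2 - (\<Sum>a. z a a)\<close>, and \<open>z a a = max 0 (winnings a - total / 2)\<close> is nonzero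
only for the bidder with the largest winnings; that fraction of her items is revealed item by
item and sold at the second-highest value. Comparing with the term \<open>i' = a\<close> of the benchmark
gives the factor \<open>1/2\<close>.
\<close>

lemma max2_geI:
  assumes "i < length xs" "k < length xs" "i \<noteq> k" "c \<le> xs!i" "c \<le> xs!k"
  shows "c \<le> max2 xs"
proof (rule ccontr)
  assume below: "\<not> c \<le> max2 xs"
  define L where "L = length xs"
  define ys where "ys = sort xs"
  have length_ys: "length ys = L" by (simp add: ys_def L_def)
  have "card {i, k} \<le> card {j. j < length xs \<and> c \<le> xs!j}"
    using assms by (intro card_mono) auto
  then have "2 \<le> length (filter (\<lambda>x. c \<le> x) xs)"
    using assms(3) by (simp add: length_filter_conv_card)
  moreover have "length (filter (\<lambda>x. c \<le> x) ys) = length (filter (\<lambda>x. c \<le> x) xs)"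
    by (metis mset_filter mset_sort size_mset ys_def)
  moreover have "{j. j < length ys \<and> c \<le> ys!j} \<subseteq> {L - 1}"
  proof
    fix j assume j: "j \<in> {j. j < length ys \<and> c \<le> ys!j}"
    show "j \<in> {L - 1}"
    proof (rule ccontr)
      assume "j \<notin> {L - 1}"
      then have "j \<le> L - 2" using j length_ys by auto
      then have "ys ! j \<le> ys ! (L - 2)"
        using sorted_nth_mono[of ys j "L - 2"] assms length_ys by (simp add: ys_def L_def)
      then show False using j below by (simp add: max2_def ys_def L_def)
    qed
  qed
  then have "card {j. j < length ys \<and> c \<le> ys!j} \<le> 1"
    using card_mono[of "{L - 1}"] by fastforce
  ultimately show False by (simp add: length_filter_conv_card)
qed

section \<open>Overlaps of shifted intervals\<close>

definition overlap :: "real \<Rightarrow> real \<Rightarrow> real \<Rightarrow> real \<Rightarrow> real" where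
  "overlap x1 y1 x2 y2 = max 0 (min y1 y2 - max x1 x2)"

lemma overlap_nonneg: "0 \<le> overlap x1 y1 x2 y2"
  by (simp add: overlap_def)

lemma overlap_commute: "overlap x1 y1 x2 y2 = overlap x2 y2 x1 y1"
  by (simp add: overlap_def min.commute max.commute)

lemma overlap_adjacent:
  "x \<le> y \<Longrightarrow> y \<le> z \<Longrightarrow> overlap a b x y + overlap a b y z = overlap a b x z"
  by (auto simp: overlap_def max_def min_def)

lemma sum_overlap_telescope:
  assumes "\<And>k. D k \<le> D (Suc k)"
  shows "(\<Sum>k<K. overlap a b (D k) (D (Suc k))) = overlap a b (D 0) (D K)"
proof (induction K)
  case 0
  then show ?case by (simp add: overlap_def)
next
  case (Suc K)
  have "D 0 \<le> D K" using lift_Suc_mono_le[of D 0 K] assms by auto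
  then show ?case using Suc overlap_adjacent[of "D 0" "D K" "D (Suc K)" a b] assms by simp
qed

lemma half_shift_pairing:
  fixes T :: "nat \<Rightarrow> real"
  assumes T_nonneg: "\<And>a. 0 \<le> T a"
  obtains z where "\<And>a b. 0 \<le> z a b"
    and "\<And>a. a < n \<Longrightarrow> (\<Sum>b<n. z a b) + (\<Sum>b<n. z b a) = T a"
    and "(\<Sum>a<n. \<Sum>b<n. z a b) = (\<Sum>a<n. T a) / 2"
    and "\<And>a. z a a = max 0 (T a - (\<Sum>a<n. T a) / 2)"
proof
  define C where "C k = (\<Sum>a<k. T a)" for k
  define W where "W = C n"
  define H where "H = W / 2"
  define z where "z a b = overlap (C a) (C (Suc a)) (C b - H) (C (Suc b) - H)" for a b
  have C_Suc: "C (Suc a) = C a + T a" for a by (simp add: C_def)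
  have C_mono: "C k \<le> C (Suc k)" for k by (simp add: C_Suc T_nonneg)
  have C_nonneg: "0 \<le> C k" for k unfolding C_def using T_nonneg by (simp add: sum_nonneg)
  have C_le_W: "k \<le> n \<Longrightarrow> C k \<le> W" for k
    unfolding W_def C_def using T_nonneg by (intro sum_mono2) auto
  have "C 0 = 0" by (simp add: C_def)
  show "0 \<le> z a b" for a b by (simp add: z_def overlap_nonneg)
  show "(\<Sum>b<n. z a b) + (\<Sum>b<n. z b a) = T a" if "a < n" for a
  proof -
    have "(\<Sum>b<n. z a b) = overlap (C a) (C (Suc a)) (C 0 - H) (C n - H)"
      unfolding z_def by (rule sum_overlap_telescope[where D="\<lambda>b. C b - H"]) (simp add: C_mono)
    moreover have "(\<Sum>b<n. z b a) = overlap (C a - H) (C (Suc a) - H) (C 0) (C n)"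
      unfolding z_def overlap_commute[of "C _"] by (rule sum_overlap_telescope) (simp add: C_mono)
    moreover have "overlap (C a) (C (Suc a)) (0 - H) (W - H)
        + overlap (C a - H) (C (Suc a) - H) 0 W = C (Suc a) - C a"
      using C_nonneg[of a] C_mono[of a] C_le_W[of "Suc a"] that
      by (auto simp: overlap_def max_def min_def H_def)
    ultimately show ?thesis using \<open>C 0 = 0\<close> W_def C_Suc by simp
  qed
  have "(\<Sum>a<n. \<Sum>b<n. z a b) = (\<Sum>a<n. overlap (0 - H) (W - H) (C a) (C (Suc a)))"
    unfolding z_def
    by (intro sum.cong refl, subst sum_overlap_telescope[where D="\<lambda>b. C b - H"])
      (auto simp: C_mono \<open>C 0 = 0\<close> W_def overlap_commute)
  also have "\<dots> = overlap (0 - H) (W - H) (C 0) (C n)"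
    by (rule sum_overlap_telescope) (simp add: C_mono)
  also have "\<dots> = H"
    using C_nonneg[of n] by (auto simp: overlap_def max_def min_def H_def W_def \<open>C 0 = 0\<close>)
  finally show "(\<Sum>a<n. \<Sum>b<n. z a b) = (\<Sum>a<n. T a) / 2"
    by (simp add: H_def W_def C_def)
  show "z a a = max 0 (T a - (\<Sum>a<n. T a) / 2)" for a
    using C_Suc[of a] C_nonneg[of n] T_nonneg[of a]
    by (auto simp: z_def overlap_def max_def min_def H_def W_def C_def)
qed

lemma half_le_shifted_revenue:
  fixes s t w :: real
  assumes "0 \<le> s" "s \<le> t" "t \<le> w"
  shows "(s + (w - t)) / 2 \<le> w / 2 - max 0 (t - w / 2) + 2 * max 0 (t - w / 2) / t * s"
proof (cases "t \<le> w / 2")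
  case True
  then show ?thesis using assms by simp
next
  case False
  define r where "r = w - t"
  have "0 < t" "0 \<le> r" "r \<le> t" using False assms by (auto simp: r_def)
  then have "r * s / t \<le> s" "r * s / t \<le> r"
    using assms by (simp_all add: pos_divide_le_eq mult_right_mono mult_left_mono mult.commute[of r])
  then have "(s + r) / 2 \<le> r + s - r * s / t"
    by (simp add: add_divide_distrib)
  also have "\<dots> = w / 2 - max 0 (t - w / 2) + 2 * max 0 (t - w / 2) / t * s"
    using False \<open>0 < t\<close> by (simp add: r_def field_simps)
  finally show ?thesis by (simp only: r_def)
qed

lemma sum_off_diagonal:
  fixes f :: "'a \<Rightarrow> 'a \<Rightarrow> 'b::ab_group_add"
  assumes "finite A"
  shows "(\<Sum>a\<in>A. \<Sum>b\<in>A. if a = b then 0 else f a b)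
    = (\<Sum>a\<in>A. \<Sum>b\<in>A. f a b) - (\<Sum>a\<in>A. f a a)"
proof -
  have "(\<Sum>a\<in>A. \<Sum>b\<in>A. f a b)
      = (\<Sum>a\<in>A. \<Sum>b\<in>A. (if a = b then 0 else f a b) + (if a = b then f a b else 0))"
    by (intro sum.cong refl) simp
  then show ?thesis using assms by (simp add: sum.distrib)
qed

definition bids ::
    "nat \<Rightarrow> nat \<Rightarrow> (nat \<Rightarrow> nat \<Rightarrow> real) \<Rightarrow> (nat \<Rightarrow> 's \<Rightarrow> real) \<Rightarrow> 's \<Rightarrow> real list"
  where "bids n m \<psi> \<phi> s = map (\<lambda>i. \<Sum>j<m. \<psi> i j * \<phi> j s) [0..<n]"

lemma length_bids [simp]: "length (bids n m \<psi> \<phi> s) = n"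
  by (simp add: bids_def)

lemma nth_bids [simp]: "i < n \<Longrightarrow> bids n m \<psi> \<phi> s ! i = (\<Sum>j<m. \<psi> i j * \<phi> j s)"
  by (simp add: bids_def)

definition signal_revenue ::
    "nat \<Rightarrow> nat \<Rightarrow> (nat \<Rightarrow> nat \<Rightarrow> real) \<Rightarrow> 's set \<Rightarrow> (nat \<Rightarrow> 's \<Rightarrow> real) \<Rightarrow> real"
  where "signal_revenue n m \<psi> S \<phi> = (\<Sum>s\<in>S. max2 (bids n m \<psi> \<phi> s))"

lemma revenue_eq_signal_revenue: "revenue n m p v S \<phi> = signal_revenue n m (psi p v) S \<phi>"
  by (simp add: revenue_def signal_revenue_def bids_def)

lemma mixed_scheme_to_nat:
  fixes S :: "'s::countable set"
  assumes "mixed_scheme m S \<phi>"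
  obtains S' :: "nat set" and \<phi>'
  where "mixed_scheme m S' \<phi>'" and "signal_revenue n m \<psi> S' \<phi>' = signal_revenue n m \<psi> S \<phi>"
proof
  let ?\<phi>' = "\<lambda>j s. \<phi> j (from_nat s)"
  have sum_image: "(\<Sum>s\<in>to_nat ` S. g s) = (\<Sum>s\<in>S. g (to_nat s))" for g :: "nat \<Rightarrow> real"
    by (simp add: sum.reindex)
  show "mixed_scheme m (to_nat ` S) ?\<phi>'"
    using assms by (auto simp: mixed_scheme_def sum_image)
  show "signal_revenue n m \<psi> (to_nat ` S) ?\<phi>' = signal_revenue n m \<psi> S \<phi>"
    by (simp add: signal_revenue_def bids_def sum_image)
qed

section \<open>Winners, winnings and second prices\<close>

locale auction =
  fixes n m :: nat and \<psi> :: "nat \<Rightarrow> nat \<Rightarrow> real"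
  assumes two_bidders: "2 \<le> n"
    and psi_nonneg: "\<And>i j. i < n \<Longrightarrow> j < m \<Longrightarrow> 0 \<le> \<psi> i j"
begin

definition highest :: "nat \<Rightarrow> real" where
  "highest j = Max ((\<lambda>i. \<psi> i j) ` {..<n})"

definition winner :: "nat \<Rightarrow> nat" where
  "winner j = (SOME i. i < n \<and> \<psi> i j = highest j)"

definition runner_up :: "nat \<Rightarrow> real" where
  "runner_up j = Max ((\<lambda>i. \<psi> i j) ` ({..<n} - {winner j}))"

definition winnings :: "nat \<Rightarrow> real" where
  "winnings a = (\<Sum>j<m. if winner j = a then highest j else 0)"

definition total :: real where
  "total = (\<Sum>j<m. highest j)"

definition second_prices :: "nat \<Rightarrow> real" where
  "second_prices a = (\<Sum>j<m. if winner j = a then runner_up j else 0)"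

lemma others_nonempty: "{..<n} - {a} \<noteq> {}"
proof -
  have "(if a = 0 then 1 else 0) \<in> {..<n} - {a}" using two_bidders by auto
  then show ?thesis by blast
qed

lemma psi_le_highest: "i < n \<Longrightarrow> \<psi> i j \<le> highest j"
  unfolding highest_def by (rule Max_ge) auto

lemma winner_less: "winner j < n" and psi_winner: "\<psi> (winner j) j = highest j"
proof -
  have "highest j \<in> (\<lambda>i. \<psi> i j) ` {..<n}"
    unfolding highest_def using two_bidders by (intro Max_in) (auto simp: lessThan_empty_iff)
  then have "\<exists>i. i < n \<and> \<psi> i j = highest j" by auto
  then show "winner j < n" "\<psi> (winner j) j = highest j"
    unfolding winner_def by (metis (mono_tags, lifting) someI_ex)+
qed

lemma highest_nonneg: "j < m \<Longrightarrow> 0 \<le> highest j"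
  using winner_less psi_winner psi_nonneg by metis

lemma runner_up_attained: "\<exists>i<n. i \<noteq> winner j \<and> \<psi> i j = runner_up j"
proof -
  have "runner_up j \<in> (\<lambda>i. \<psi> i j) ` ({..<n} - {winner j})"
    unfolding runner_up_def using others_nonempty by (intro Max_in) auto
  then show ?thesis by auto
qed

lemma runner_up_nonneg: "j < m \<Longrightarrow> 0 \<le> runner_up j"
  using runner_up_attained psi_nonneg by metis

lemma Max_others_le_highest: "Max ((\<lambda>i. \<psi> i j) ` ({..<n} - {a})) \<le> highest j"
  using others_nonempty psi_le_highest by (subst Max_le_iff) auto

lemma runner_up_le_highest: "runner_up j \<le> highest j"
  unfolding runner_up_def by (rule Max_others_le_highest)

lemma winnings_nonneg: "0 \<le> winnings a"
  unfolding winnings_def using highest_nonneg by (intro sum_nonneg) auto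

lemma sum_winnings: "(\<Sum>a<n. winnings a) = total"
proof -
  have "(\<Sum>a<n. winnings a) = (\<Sum>j<m. \<Sum>a<n. if winner j = a then highest j else 0)"
    unfolding winnings_def by (rule sum.swap)
  also have "\<dots> = total" unfolding total_def using winner_less by (simp add: sum.delta)
  finally show ?thesis .
qed

lemma second_prices_nonneg: "0 \<le> second_prices a"
  unfolding second_prices_def using runner_up_nonneg by (intro sum_nonneg) auto

lemma second_prices_le_winnings: "second_prices a \<le> winnings a"
  unfolding second_prices_def winnings_def using runner_up_le_highest by (intro sum_mono) auto

lemma winnings_le_total: "a < n \<Longrightarrow> winnings a \<le> total"
  unfolding sum_winnings[symmetric] using winnings_nonneg by (intro member_le_sum) auto

lemma winnings_add_le_total:
  assumes "a < n" "b < n" "a \<noteq> b"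
  shows "winnings a + winnings b \<le> total"
proof -
  have "(\<Sum>x\<in>{a, b}. winnings x) \<le> (\<Sum>x<n. winnings x)"
    using assms winnings_nonneg by (intro sum_mono2) auto
  then show ?thesis using assms by (simp add: sum_winnings)
qed

lemma benchmark_le:
  assumes "a < n"
  shows "Min ((\<lambda>i'. \<Sum>j<m. Max ((\<lambda>i. \<psi> i j) ` ({..<n} - {i'}))) ` {..<n})
    \<le> second_prices a + (total - winnings a)"
proof -
  have "total - winnings a = (\<Sum>j<m. if winner j = a then 0 else highest j)"
    unfolding total_def winnings_def by (simp add: sum_subtractf[symmetric]) (intro sum.cong, auto)
  then have "second_prices a + (total - winnings a)
      = (\<Sum>j<m. if winner j = a then runner_up j else highest j)"
    unfolding second_prices_def by (simp add: sum.distrib[symmetric]) (intro sum.cong, auto)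
  also have "(\<Sum>j<m. Max ((\<lambda>i. \<psi> i j) ` ({..<n} - {a}))) \<le> \<dots>"
    using Max_others_le_highest by (intro sum_mono) (auto simp: runner_up_def)
  moreover have "Min ((\<lambda>i'. \<Sum>j<m. Max ((\<lambda>i. \<psi> i j) ` ({..<n} - {i'}))) ` {..<n})
      \<le> (\<Sum>j<m. Max ((\<lambda>i. \<psi> i j) ` ({..<n} - {a})))"
    using assms by (intro Min_le) auto
  ultimately show ?thesis by linarith
qed

lemma max2_bids_nonneg:
  assumes "\<And>j. j < m \<Longrightarrow> 0 \<le> \<phi> j s"
  shows "0 \<le> max2 (bids n m \<psi> \<phi> s)"
proof -
  have "0 \<le> bids n m \<psi> \<phi> s ! i" if "i < n" for i
    using that assms psi_nonneg by (auto intro!: sum_nonneg)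
  then show ?thesis using two_bidders by (intro max2_geI[of 0 _ 1]) auto
qed

lemma winnings_mult_le_bid:
  assumes "c < n" "\<And>j. j < m \<Longrightarrow> 0 \<le> \<phi> j s"
    and "\<And>j. j < m \<Longrightarrow> winner j = c \<Longrightarrow> \<phi> j s = x"
  shows "winnings c * x \<le> (\<Sum>j<m. \<psi> c j * \<phi> j s)"
proof -
  have "winnings c * x = (\<Sum>j<m. if winner j = c then highest j * x else 0)"
    unfolding winnings_def sum_distrib_right by (intro sum.cong) auto
  also have "\<dots> \<le> (\<Sum>j<m. \<psi> c j * \<phi> j s)"
    using assms psi_nonneg psi_winner by (intro sum_mono) auto
  finally show ?thesis .
qed

end

section \<open>The pairing scheme\<close>

locale pairing = auction +
  fixes z :: "nat \<Rightarrow> nat \<Rightarrow> real"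
  assumes z_nonneg: "\<And>a b. 0 \<le> z a b"
    and z_balance: "\<And>a. a < n \<Longrightarrow> (\<Sum>b<n. z a b) + (\<Sum>b<n. z b a) = winnings a"
begin

lemma z_le_winnings:
  assumes "a < n" "b < n"
  shows "z a b \<le> winnings a" and "z a b \<le> winnings b"
proof -
  have "z a b \<le> (\<Sum>b<n. z a b)" "z a b \<le> (\<Sum>a<n. z a b)"
    using assms z_nonneg by (intro member_le_sum; simp)+
  moreover have "0 \<le> (\<Sum>b'<n. z b' a)" "0 \<le> (\<Sum>b'<n. z b b')"
    using z_nonneg by (simp_all add: sum_nonneg)
  ultimately show "z a b \<le> winnings a" "z a b \<le> winnings b"
    using z_balance assms by fastforce+
qed

text \<open>If \<open>winnings (winner j) = 0\<close> then item \<open>j\<close> is worthless; division by zero makes its pair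
  fractions \<open>0\<close>, and \<open>self_fraction\<close> sends it entirely to its own signal.\<close>

definition pair_fraction :: "nat \<Rightarrow> nat \<Rightarrow> nat \<Rightarrow> real" where
  "pair_fraction j a b =
     ((if winner j = a then z a b else 0) + (if winner j = b then z a b else 0)) / winnings (winner j)"

definition self_fraction :: "nat \<Rightarrow> real" where
  "self_fraction j =
     (if winnings (winner j) = 0 then 1 else 2 * z (winner j) (winner j) / winnings (winner j))"

definition scheme :: "nat \<Rightarrow> (nat \<times> nat) + nat \<Rightarrow> real" where
  "scheme j s = (case s of
     Inl (a, b) \<Rightarrow> if a = b then 0 else pair_fraction j a b
   | Inr k \<Rightarrow> if k = j then self_fraction j else 0)"

definition signals :: "((nat \<times> nat) + nat) set" where
  "signals = ({..<n} \<times> {..<n}) <+> {..<m}"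

lemma sum_signals:
  "(\<Sum>s\<in>signals. g s) = (\<Sum>a<n. \<Sum>b<n. g (Inl (a, b))) + (\<Sum>k<m. g (Inr k))"
  by (simp add: signals_def sum.Plus sum.cartesian_product)

lemma scheme_nonneg: "0 \<le> scheme j s"
  using z_nonneg winnings_nonneg
  by (auto simp: scheme_def pair_fraction_def self_fraction_def split: sum.split)

lemma sum_pair_fraction:
  "(\<Sum>a<n. \<Sum>b<n. pair_fraction j a b) = (if winnings (winner j) = 0 then 0 else 1)"
proof -
  define g where "g = winner j"
  have g: "g < n" using winner_less g_def by simp
  have "(\<Sum>a<n. \<Sum>b<n. pair_fraction j a b)
      = (\<Sum>a<n. \<Sum>b<n. (if g = a then z a b else 0)) / winnings g
        + (\<Sum>a<n. \<Sum>b<n. (if g = b then z a b else 0)) / winnings g"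
    unfolding pair_fraction_def g_def[symmetric]
    by (simp only: add_divide_distrib sum.distrib sum_divide_distrib)
  also have "\<dots> = ((\<Sum>b<n. z g b) + (\<Sum>a<n. z a g)) / winnings g"
    using g by (simp add: sum.swap[of "\<lambda>a b. if g = a then z a b else 0"] add_divide_distrib)
  finally show ?thesis using z_balance[OF g] g_def by simp
qed

lemma sum_scheme:
  assumes "j < m"
  shows "(\<Sum>s\<in>signals. scheme j s) = 1"
proof -
  define g where "g = winner j"
  have "(\<Sum>a<n. pair_fraction j a a) = (\<Sum>a<n. if g = a then 2 * z g g / winnings g else 0)"
    by (intro sum.cong refl) (simp add: pair_fraction_def g_def)
  then have diagonal: "(\<Sum>a<n. pair_fraction j a a) = 2 * z g g / winnings g"
    using winner_less g_def by simp
  have "(\<Sum>s\<in>signals. scheme j s)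
      = (\<Sum>a<n. \<Sum>b<n. if a = b then 0 else pair_fraction j a b) + self_fraction j"
    using assms by (simp add: sum_signals scheme_def)
  also have "\<dots> = (\<Sum>a<n. \<Sum>b<n. pair_fraction j a b) - (\<Sum>a<n. pair_fraction j a a) + self_fraction j"
    by (simp add: sum_off_diagonal)
  also have "\<dots> = 1"
    using sum_pair_fraction[of j] diagonal by (simp add: self_fraction_def g_def)
  finally show ?thesis .
qed

lemma scheme_mixed: "mixed_scheme m signals scheme"
  unfolding mixed_scheme_def
proof (intro conjI allI impI ballI)
  show "finite signals" by (simp add: signals_def)
  fix j s assume "j < m" "s \<in> signals"
  then show "scheme j s \<le> 1"
    using sum_scheme member_le_sum[of s signals "scheme j"] scheme_nonneg
    by (simp add: signals_def)
qed (simp_all add: scheme_nonneg sum_scheme)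

lemma max2_bids_pair_signal:
  assumes "a < n" "b < n" "a \<noteq> b"
  shows "z a b \<le> max2 (bids n m \<psi> scheme (Inl (a, b)))"
proof -
  have "z a b \<le> (\<Sum>j<m. \<psi> c j * scheme j (Inl (a, b)))" if "c = a \<or> c = b" for c
  proof -
    have c: "c < n" using that assms by auto
    have "winnings c * (z a b / winnings c) = z a b"
      using z_le_winnings[OF assms(1,2)] z_nonneg[of a b] that by auto
    moreover have "scheme j (Inl (a, b)) = z a b / winnings c" if "winner j = c" for j
      using \<open>winner j = c\<close> \<open>c = a \<or> c = b\<close> assms(3)
      by (auto simp: scheme_def pair_fraction_def)
    ultimately show ?thesis
      using winnings_mult_le_bid[of c scheme "Inl (a, b)" "z a b / winnings c"] c scheme_nonneg
      by simp
  qed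
  then show ?thesis using assms by (intro max2_geI[of a _ b]) auto
qed

lemma max2_bids_self_signal:
  assumes "k < m"
  shows "self_fraction k * runner_up k \<le> max2 (bids n m \<psi> scheme (Inr k))"
proof -
  have bid: "bids n m \<psi> scheme (Inr k) ! i = self_fraction k * \<psi> i k" if "i < n" for i
    using that assms by (simp add: scheme_def if_distrib cong: if_cong)
  obtain i where i: "i < n" "i \<noteq> winner k" "\<psi> i k = runner_up k"
    using runner_up_attained by blast
  have "0 \<le> self_fraction k" using scheme_nonneg[of k "Inr k"] by (simp add: scheme_def)
  then have "self_fraction k * runner_up k \<le> self_fraction k * \<psi> (winner k) k"
    using psi_winner runner_up_le_highest by (simp add: mult_left_mono)
  then show ?thesis
    using i winner_less psi_winner bid by (intro max2_geI[of "winner k" _ i]) auto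
qed

lemma sum_self_fraction_ge:
  "2 * z a a / winnings a * second_prices a \<le> (\<Sum>k<m. self_fraction k * runner_up k)"
proof -
  have "2 * z a a / winnings a * second_prices a
      = (\<Sum>k<m. if winner k = a then 2 * z a a / winnings a * runner_up k else 0)"
    unfolding second_prices_def sum_distrib_left by (intro sum.cong) auto
  also have "\<dots> \<le> (\<Sum>k<m. self_fraction k * runner_up k)"
    using runner_up_nonneg z_nonneg winnings_nonneg
    by (intro sum_mono) (auto simp: self_fraction_def)
  finally show ?thesis .
qed

lemma pairing_revenue:
  "(\<Sum>a<n. \<Sum>b<n. if a = b then 0 else z a b) + (\<Sum>k<m. self_fraction k * runner_up k)
    \<le> signal_revenue n m \<psi> signals scheme"
proof -
  have "0 \<le> max2 (bids n m \<psi> scheme s)" for s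
    by (rule max2_bids_nonneg) (rule scheme_nonneg)
  then show ?thesis
    unfolding signal_revenue_def sum_signals
    using max2_bids_pair_signal max2_bids_self_signal by (intro add_mono sum_mono) auto
qed

end

context auction
begin

lemma exists_max_winnings: obtains a where "a < n" and "\<And>b. b < n \<Longrightarrow> winnings b \<le> winnings a"
  using Max_in[of "winnings ` {..<n}"] Max_ge[of "winnings ` {..<n}"] two_bidders
  by (fastforce simp: lessThan_empty_iff)

theorem exists_scheme_half_benchmark:
  "\<exists>(S :: nat set) \<phi>. mixed_scheme m S \<phi> \<and>
     Min ((\<lambda>i'. \<Sum>j<m. Max ((\<lambda>i. \<psi> i j) ` ({..<n} - {i'}))) ` {..<n}) / 2
       \<le> signal_revenue n m \<psi> S \<phi>"
proof -
  obtain z where z_nonneg: "\<And>a b. 0 \<le> z a b"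
    and z_balance: "\<And>a. a < n \<Longrightarrow> (\<Sum>b<n. z a b) + (\<Sum>b<n. z b a) = winnings a"
    and z_sum: "(\<Sum>a<n. \<Sum>b<n. z a b) = total / 2"
    and z_diagonal: "\<And>a. z a a = max 0 (winnings a - total / 2)"
    using half_shift_pairing[of winnings n] winnings_nonneg by (auto simp: sum_winnings)
  interpret pairing n m \<psi> z
    by unfold_locales (use z_nonneg z_balance in auto)
  obtain a where a: "a < n" "\<And>b. b < n \<Longrightarrow> winnings b \<le> winnings a"
    using exists_max_winnings by blast
  have "z b b = 0" if "b < n" "b \<noteq> a" for b
    using winnings_add_le_total[OF that(1) a(1) that(2)] a(2)[OF that(1)] by (simp add: z_diagonal)
  then have "(\<Sum>b<n. z b b) = (\<Sum>b<n. if b = a then z a a else 0)"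
    by (intro sum.cong) auto
  then have pairs: "(\<Sum>a<n. \<Sum>b<n. if a = b then 0 else z a b) = total / 2 - z a a"
    using a(1) by (simp add: sum_off_diagonal z_sum)
  have "Min ((\<lambda>i'. \<Sum>j<m. Max ((\<lambda>i. \<psi> i j) ` ({..<n} - {i'}))) ` {..<n}) / 2
      \<le> (second_prices a + (total - winnings a)) / 2"
    using benchmark_le[OF a(1)] by simp
  also have "\<dots> \<le> total / 2 - z a a + 2 * z a a / winnings a * second_prices a"
    unfolding z_diagonal using second_prices_nonneg second_prices_le_winnings
    by (rule half_le_shifted_revenue) (rule winnings_le_total[OF a(1)])
  also have "\<dots> \<le> signal_revenue n m \<psi> signals scheme"
    using pairing_revenue sum_self_fraction_ge[of a] pairs by simp
  finally have bound: "Min ((\<lambda>i'. \<Sum>j<m. Max ((\<lambda>i. \<psi> i j) ` ({..<n} - {i'}))) ` {..<n}) / 2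
      \<le> signal_revenue n m \<psi> signals scheme" .
  obtain S :: "nat set" and \<phi> where "mixed_scheme m S \<phi>"
    and "signal_revenue n m \<psi> S \<phi> = signal_revenue n m \<psi> signals scheme"
    by (rule mixed_scheme_to_nat[OF scheme_mixed])
  with bound show ?thesis by (intro exI[of _ S] exI[of _ \<phi>]) simp
qed

end

theorem theorem2:
  fixes n m :: nat and p :: "nat \<Rightarrow> real" and v :: "nat \<Rightarrow> nat \<Rightarrow> real"
  assumes "n \<ge> 2"
    and "\<forall>j<m. p j \<ge> 0" and "(\<Sum>j<m. p j) = 1"
    and "\<forall>i<n. \<forall>j<m. v i j \<ge> 0"
  shows "\<exists>(S :: nat set) \<phi>. mixed_scheme m S \<phi> \<and>
           revenue n m p v S \<phi> \<ge> benchmark n m p v / 2"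
proof -
  interpret auction n m "psi p v"
    using assms by unfold_locales (auto simp: psi_def)
  from exists_scheme_half_benchmark show ?thesis
    by (simp add: revenue_eq_signal_revenue benchmark_def)
qed

end
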